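(* Consider the D2D channel assignment game described in the context, with utilities $\hat U^N_i(a)=\frac1N\sum_{k=1}^N\hat U_{i,k}(a)$, where each $\hat U_{i,k}(a)$ is an independent copy of $$\hat U_i(a)=\sum_{j\in\mathcal{D}(a_i)}\hat\nu_j(a_i,a_{-i})-\sum_{j\in\mathcal{D}(a_i)\setminus\{i\}}\hat\nu^{(-i)}_j(a_{-i}).$$ Then this game is a noisy potential game with potential $\phi(a)=\mathbb{E}\big[\sum_{j\in\mathcal{D}}\hat\nu_j(a)\big]$, i.e. with $U_i=\mathbb{E}[\hat U^N_i]$, for all $i\in\mathcal{D}$, $a_i,a_i'\in\mathcal{F}$, $a_{-i}\in\mathcal{F}^{|\mathcal{D}|-1}$: $U_i(a_i,a_{-i})-U_i(a_i',a_{-i})=\phi(a_i,a_{-i})-\phi(a_i',a_{-i})$.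
   Context: A finite set $\mathcal{D}$ of users (players) and a finite set $\mathcal{F}$ of orthogonal channels; each player's action set is $X_i=\mathcal{F}$, and an action profile $a=(a_i,a_{-i})\in\mathcal{F}^{|\mathcal{D}|}$ assigns one channel to each user. $\mathcal{D}(a_i)=\{j\in\mathcal{D}:a_j=a_i\}$ is the set of users on the same channel as $i$. User $j$ on channel $c$ has SINR $\gamma_j=P_jg_j/(\sum_{l\in\mathcal{D}(c)\setminus\{j\}}P_lg_{l,j}+P_0)$ with transmit powers $P_l>0$, noise power $P_0>0$, and random channel power gains $g_j,g_{l,j}$; its measured (random) data rate is $\hat\nu_j(a)=W_c\log_2(1+\gamma_j)$, assumed to have finite expectation. $\hat\nu^{(-i)}_j(a_{-i})$ denotes the measured rate of user $j$ when user $i$ does not transmit (so only users other than $i$ on $j$'s channel interfere). A game with random utilities $\hat U_i$ is a noisy potential game if the game with expected utilities $U_i=\mathbb{E}[\hat U_i]$ is an exact potential game. *)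

theory Defs
  imports "HOL-Probability.Probability"
begin

text \<open>Random quantities live on a probability space with outcomes of type 'm:
  g j w is the direct gain of user j, gc l j w the cross gain from l to j.\<close>

definition sinr :: "('d \<Rightarrow> real) \<Rightarrow> real \<Rightarrow> ('d \<Rightarrow> 'm \<Rightarrow> real) \<Rightarrow> ('d \<Rightarrow> 'd \<Rightarrow> 'm \<Rightarrow> real)
    \<Rightarrow> 'd set \<Rightarrow> ('d \<Rightarrow> 'f) \<Rightarrow> 'd \<Rightarrow> 'm \<Rightarrow> real" where
  "sinr P P0 g gc S a j w =
     P j * g j w / ((\<Sum>l\<in>{l\<in>S. a l = a j \<and> l \<noteq> j}. P l * gc l j w) + P0)"

text \<open>Measured rate of user j under profile a, where only users in S transmit
  (S = UNIV: all users; S = UNIV - {i}: user i silent).\<close>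
definition rate :: "('f \<Rightarrow> real) \<Rightarrow> ('d \<Rightarrow> real) \<Rightarrow> real \<Rightarrow> ('d \<Rightarrow> 'm \<Rightarrow> real)
    \<Rightarrow> ('d \<Rightarrow> 'd \<Rightarrow> 'm \<Rightarrow> real) \<Rightarrow> 'd set \<Rightarrow> ('d \<Rightarrow> 'f) \<Rightarrow> 'd \<Rightarrow> 'm \<Rightarrow> real" where
  "rate W P P0 g gc S a j w = W (a j) * log 2 (1 + sinr P P0 g gc S a j w)"

definition util :: "('f \<Rightarrow> real) \<Rightarrow> ('d \<Rightarrow> real) \<Rightarrow> real \<Rightarrow> ('d \<Rightarrow> 'm \<Rightarrow> real)
    \<Rightarrow> ('d \<Rightarrow> 'd \<Rightarrow> 'm \<Rightarrow> real) \<Rightarrow> 'd \<Rightarrow> ('d \<Rightarrow> 'f) \<Rightarrow> 'm \<Rightarrow> real" where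
  "util W P P0 g gc i a w =
     (\<Sum>j\<in>{j. a j = a i}. rate W P P0 g gc UNIV a j w)
   - (\<Sum>j\<in>{j. a j = a i \<and> j \<noteq> i}. rate W P P0 g gc (UNIV - {i}) a j w)"

definition utilN :: "nat \<Rightarrow> ('f \<Rightarrow> real) \<Rightarrow> ('d \<Rightarrow> real) \<Rightarrow> real \<Rightarrow> ('d \<Rightarrow> 'm \<Rightarrow> real)
    \<Rightarrow> ('d \<Rightarrow> 'd \<Rightarrow> 'm \<Rightarrow> real) \<Rightarrow> 'd \<Rightarrow> ('d \<Rightarrow> 'f) \<Rightarrow> (nat \<Rightarrow> 'm) \<Rightarrow> real" where
  "utilN N W P P0 g gc i a w = (1 / real N) * (\<Sum>k<N. util W P P0 g gc i a (w k))"

definition exact_potential_game :: "('d \<Rightarrow> ('d \<Rightarrow> 'f) \<Rightarrow> real) \<Rightarrow> (('d \<Rightarrow> 'f) \<Rightarrow> real) \<Rightarrow> bool" where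
  "exact_potential_game U \<phi> \<longleftrightarrow>
     (\<forall>i a x y. U i (a(i := x)) - U i (a(i := y)) = \<phi> (a(i := x)) - \<phi> (a(i := y)))"

definition noisy_potential_game :: "'w measure \<Rightarrow> ('d \<Rightarrow> ('d \<Rightarrow> 'f) \<Rightarrow> 'w \<Rightarrow> real)
    \<Rightarrow> (('d \<Rightarrow> 'f) \<Rightarrow> real) \<Rightarrow> bool" where
  "noisy_potential_game M Uhat \<phi> \<longleftrightarrow>
     exact_potential_game (\<lambda>i a. integral\<^sup>L M (Uhat i a)) \<phi>"

end

theory Submission
  imports Defs
begin

text \<open>Removing user \<open>i\<close> from the sum-rate leaves exactly \<open>\<hat>U_i\<close> plus the sum-rate of the
  others with \<open>i\<close> silent; the latter does not depend on \<open>a_i\<close>. So \<open>\<hat>U_i\<close> differs from the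
  sum-rate by a term independent of \<open>i\<close>'s own action, and taking expectations (the sample
  mean of \<open>N\<close> i.i.d. copies has the same expectation as one copy) gives an exact potential.\<close>

lemma exact_potential_gameI:
  assumes "\<And>i a. U i a = \<phi> a - C i a"
    and "\<And>i a x y. C i (a(i := x)) = C i (a(i := y))"
  shows "exact_potential_game U \<phi>"
  unfolding exact_potential_game_def using assms by simp

lemma (in prob_space) integral_PiM_sample_mean:
  assumes "integrable M f" and "N \<ge> 1"
  shows "integral\<^sup>L (PiM {..<N} (\<lambda>_. M)) (\<lambda>w. (1 / real N) * (\<Sum>k<N. f (w k))) = integral\<^sup>L M f"
proof -
  let ?M\<^sub>N = "PiM {..<N} (\<lambda>_. M)"
  have component: "integrable ?M\<^sub>N (\<lambda>w. f (w k)) \<and> integral\<^sup>L ?M\<^sub>N (\<lambda>w. f (w k)) = integral\<^sup>L M f"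
    if "k < N" for k
  proof -
    have distr: "distr ?M\<^sub>N M (\<lambda>w. w k) = M"
      using distr_PiM_component[of "{..<N}" "\<lambda>_. M" k] prob_space_axioms that by simp
    have meas: "(\<lambda>w. w k) \<in> measurable ?M\<^sub>N M"
      using that by (intro measurable_component_singleton) simp
    have f_meas: "f \<in> borel_measurable M" using assms(1) by auto
    show ?thesis
      using integral_distr[OF meas f_meas] integrable_distr_eq[OF meas f_meas] distr assms(1)
      by simp
  qed
  have "integral\<^sup>L ?M\<^sub>N (\<lambda>w. (1 / real N) * (\<Sum>k<N. f (w k)))
      = (1 / real N) * (\<Sum>k<N. integral\<^sup>L ?M\<^sub>N (\<lambda>w. f (w k)))"
    using component by (simp add: Bochner_Integration.integral_sum)
  also have "\<dots> = integral\<^sup>L M f"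
    using component assms(2) by simp
  finally show ?thesis .
qed

lemma rate_fun_upd_silent:
  assumes "i \<notin> S" and "j \<noteq> i"
  shows "rate W P P0 g gc S (a(i := x)) j w = rate W P P0 g gc S (a(i := y)) j w"
proof -
  have "{l\<in>S. (a(i := x)) l = (a(i := x)) j \<and> l \<noteq> j} = {l\<in>S. (a(i := y)) l = (a(i := y)) j \<and> l \<noteq> j}"
    using assms by auto
  then show ?thesis
    using assms unfolding rate_def sinr_def by simp
qed

lemma rate_silent_other_channel:
  assumes "a j \<noteq> a i"
  shows "rate W P P0 g gc (UNIV - {i}) a j w = rate W P P0 g gc UNIV a j w"
proof -
  have "{l\<in>UNIV - {i}. a l = a j \<and> l \<noteq> j} = {l. a l = a j \<and> l \<noteq> j}"
    using assms by auto
  then show ?thesis unfolding rate_def sinr_def by simp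
qed

lemma sum_rate_eq_util_plus_silent:
  fixes a :: "'d::finite \<Rightarrow> 'f"
  shows "(\<Sum>j\<in>UNIV. rate W P P0 g gc UNIV a j w) =
    util W P P0 g gc i a w + (\<Sum>j\<in>UNIV - {i}. rate W P P0 g gc (UNIV - {i}) a j w)"
proof -
  let ?R = "\<lambda>j. rate W P P0 g gc UNIV a j w"
  let ?Q = "\<lambda>j. rate W P P0 g gc (UNIV - {i}) a j w"
  have "(\<Sum>j\<in>UNIV. ?R j) = (\<Sum>j\<in>{j. a j = a i}. ?R j) + (\<Sum>j\<in>{j. a j \<noteq> a i}. ?R j)"
    by (subst sum.union_disjoint[symmetric]) (auto intro: sum.cong)
  moreover have "(\<Sum>j\<in>UNIV - {i}. ?Q j)
      = (\<Sum>j\<in>{j. a j = a i \<and> j \<noteq> i}. ?Q j) + (\<Sum>j\<in>{j. a j \<noteq> a i}. ?Q j)"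
    by (subst sum.union_disjoint[symmetric]) (auto intro: sum.cong)
  moreover have "(\<Sum>j\<in>{j. a j \<noteq> a i}. ?Q j) = (\<Sum>j\<in>{j. a j \<noteq> a i}. ?R j)"
    by (rule sum.cong) (auto intro: rate_silent_other_channel)
  ultimately show ?thesis unfolding util_def by simp
qed

theorem proposition1:
  fixes M :: "'m measure" and N :: nat
    and W :: "'f::finite \<Rightarrow> real" and P :: "'d::finite \<Rightarrow> real" and P0 :: real
    and g :: "'d \<Rightarrow> 'm \<Rightarrow> real" and gc :: "'d \<Rightarrow> 'd \<Rightarrow> 'm \<Rightarrow> real"
  assumes "prob_space M"
    and "N \<ge> 1"
    and "\<And>l. P l > 0" and "P0 > 0"
    and "\<And>j. g j \<in> borel_measurable M" and "\<And>l j. gc l j \<in> borel_measurable M"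
    and "\<And>j w. w \<in> space M \<Longrightarrow> g j w \<ge> 0"
    and "\<And>l j w. w \<in> space M \<Longrightarrow> gc l j w \<ge> 0"
    and "\<And>a j. integrable M (rate W P P0 g gc UNIV a j)"
    and "\<And>i a j. integrable M (rate W P P0 g gc (UNIV - {i}) a j)"
  shows "noisy_potential_game (PiM {..<N} (\<lambda>_. M)) (utilN N W P P0 g gc)
           (\<lambda>a. integral\<^sup>L M (\<lambda>w. \<Sum>j\<in>UNIV. rate W P P0 g gc UNIV a j w))"
proof -
  define C where "C i a = integral\<^sup>L M (\<lambda>w. \<Sum>j\<in>UNIV - {i}. rate W P P0 g gc (UNIV - {i}) a j w)"
    for i a
  have util_integrable: "integrable M (util W P P0 g gc i a)" for i a
    unfolding util_def using assms(9,10) by auto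
  have "integral\<^sup>L (PiM {..<N} (\<lambda>_. M)) (utilN N W P P0 g gc i a)
      = integral\<^sup>L M (\<lambda>w. \<Sum>j\<in>UNIV. rate W P P0 g gc UNIV a j w) - C i a" for i a
    unfolding utilN_def C_def sum_rate_eq_util_plus_silent[of _ _ _ _ _ _ _ i]
    using prob_space.integral_PiM_sample_mean[OF assms(1) util_integrable assms(2)]
      util_integrable assms(10) by simp
  moreover have "C i (a(i := x)) = C i (a(i := y))" for i a x y
    unfolding C_def by (intro Bochner_Integration.integral_cong sum.cong refl)
      (auto intro: rate_fun_upd_silent)
  ultimately show ?thesis
    unfolding noisy_potential_game_def by (rule exact_potential_gameI)
qed

end
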